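(* Let $a,b,x$ be non-commuting indeterminates and let $D\in\mathbb{Z}\langle\langle a,b,x\rangle\rangle$ be the unique series satisfying $$D=1+(x-ab+aDb)\,D$$ (equivalently, $D$ is the sum of all Dyck words in $a,b$ in which every occurrence of the factor $ab$ is replaced by $x$). Define $U\in\mathbb{Z}\langle\langle a,b,x\rangle\rangle$ by $(1-aDb)^{-1}=1+aUb$. Then $$U=(1+aUb)\big(1+(x-ab+ba)U\big),$$ and this equation determines $U$ uniquely.
   Context: $\mathbb{Z}\langle\langle a,b,x\rangle\rangle$ is the ring of formal power series in non-commuting variables $a,b,x$ with integer coefficients. A Dyck word is a word in $a,b$ with equally many $a$'s and $b$'s such that every prefix has at least as many $a$'s as $b$'s (equivalently, a lattice path with steps $a=(1,1)$, $b=(1,-1)$ from the origin back to the $x$-axis never going below it); the empty word is included. *)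

theory Defs
  imports Main
begin

datatype letter = LA | LB | LX

type_synonym ncps = "letter list \<Rightarrow> int"

definition nc_one :: ncps where
  "nc_one w = (if w = [] then 1 else 0)"

definition nc_var :: "letter \<Rightarrow> ncps" where
  "nc_var c w = (if w = [c] then 1 else 0)"

definition nc_a :: ncps where "nc_a = nc_var LA"
definition nc_b :: ncps where "nc_b = nc_var LB"
definition nc_x :: ncps where "nc_x = nc_var LX"

definition nc_add :: "ncps \<Rightarrow> ncps \<Rightarrow> ncps" (infixl "\<oplus>" 65) where
  "nc_add f g w = f w + g w"

definition nc_sub :: "ncps \<Rightarrow> ncps \<Rightarrow> ncps" (infixl "\<ominus>" 65) where
  "nc_sub f g w = f w - g w"

definition nc_mul :: "ncps \<Rightarrow> ncps \<Rightarrow> ncps" (infixl "\<otimes>" 70) where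
  "nc_mul f g w = (\<Sum>i\<le>length w. f (take i w) * g (drop i w))"

end

theory Submission imports Defs begin

(* The identity for U is then
   pure ring algebra: writing E = x - ab and P = aDb, the defining equation of D says
   (1 - E - P) D = 1, and (1 - P)(1 + aUb) = 1 gives aUb = aDb + aDb aUb, hence, after
   cancelling the outer a and b, U = D (1 + baU).  Multiplying by 1 - E - P yields
   1 + (E + ba) U = (1 - P) U, and multiplying by 1 + aUb (the other inverse) gives
   U = (1 + aUb)(1 + (E + ba) U).  The cancellation of a _ b holds since the coefficient
   of a w b in a f b is f w.  Uniqueness is a contraction argument: the right-hand side
   only uses coefficients of V on strictly shorter words, so two solutions agree on all
   words of length < n for every n. *)

lemma sum_triangle_reindex:
  "(\<Sum>i\<le>n. \<Sum>j\<le>i. G j (i - j)) = (\<Sum>j\<le>(n::nat). \<Sum>k\<le>n - j. (G j k :: 'a::comm_monoid_add))"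
proof (induction n)
  case 0
  then show ?case by simp
next
  case (Suc n)
  have "(\<Sum>j\<le>Suc n. \<Sum>k\<le>Suc n - j. G j k) = (\<Sum>j\<le>n. \<Sum>k\<le>Suc n - j. G j k) + G (Suc n) 0"
    by simp
  also have "(\<Sum>j\<le>n. \<Sum>k\<le>Suc n - j. G j k) = (\<Sum>j\<le>n. (\<Sum>k\<le>n - j. G j k) + G j (Suc n - j))"
    by (rule sum.cong) (auto simp: Suc_diff_le)
  finally show ?case
    using Suc by (simp add: sum.distrib add.assoc)
qed

lemma nc_mul_assoc: "(f \<otimes> g) \<otimes> h = f \<otimes> (g \<otimes> h)"
proof
  fix w :: "letter list"
  define n where "n = length w"
  have "((f \<otimes> g) \<otimes> h) w =
      (\<Sum>i\<le>n. \<Sum>j\<le>i. f (take j w) * g (take (i - j) (drop j w)) * h (drop (i - j) (drop j w)))"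
    unfolding nc_mul_def n_def
    by (rule sum.cong) (auto simp: sum_distrib_right min_def take_drop intro!: sum.cong)
  also have "\<dots> = (\<Sum>j\<le>n. \<Sum>k\<le>n - j. f (take j w) * g (take k (drop j w)) * h (drop k (drop j w)))"
    by (rule sum_triangle_reindex)
  also have "\<dots> = (f \<otimes> (g \<otimes> h)) w"
    unfolding nc_mul_def n_def
    by (auto simp: sum_distrib_left mult.assoc intro!: sum.cong)
  finally show "((f \<otimes> g) \<otimes> h) w = (f \<otimes> (g \<otimes> h)) w" .
qed

lemma nc_mul_add_left: "(f \<oplus> g) \<otimes> h = (f \<otimes> h) \<oplus> (g \<otimes> h)"
  by (auto simp: nc_mul_def nc_add_def fun_eq_iff sum.distrib algebra_simps)

lemma nc_mul_add_right: "h \<otimes> (f \<oplus> g) = (h \<otimes> f) \<oplus> (h \<otimes> g)"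
  by (auto simp: nc_mul_def nc_add_def fun_eq_iff sum.distrib algebra_simps)

lemma nc_mul_one_left: "nc_one \<otimes> f = f"
proof
  fix w
  have "(nc_one \<otimes> f) w = (\<Sum>i\<le>length w. if i = 0 then f w else 0)"
    unfolding nc_mul_def nc_one_def by (rule sum.cong) auto
  then show "(nc_one \<otimes> f) w = f w" by simp
qed

lemma nc_mul_one_right: "f \<otimes> nc_one = f"
proof
  fix w
  have "(f \<otimes> nc_one) w = (\<Sum>i\<le>length w. if i = length w then f w else 0)"
    unfolding nc_mul_def nc_one_def by (rule sum.cong) auto
  then show "(f \<otimes> nc_one) w = f w" by simp
qed

text \<open>A copy of the coefficient functions carrying the ring structure, so that the
  algebraic part of the argument can use ordinary ring notation and automation.\<close>
typedef ncs = "UNIV :: ncps set" by simp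

setup_lifting type_definition_ncs

instantiation ncs :: ring_1
begin

lift_definition zero_ncs :: ncs is "\<lambda>w. 0" .
lift_definition one_ncs :: ncs is nc_one .
lift_definition plus_ncs :: "ncs \<Rightarrow> ncs \<Rightarrow> ncs" is nc_add .
lift_definition minus_ncs :: "ncs \<Rightarrow> ncs \<Rightarrow> ncs" is nc_sub .
lift_definition uminus_ncs :: "ncs \<Rightarrow> ncs" is "\<lambda>f w. - f w" .
lift_definition times_ncs :: "ncs \<Rightarrow> ncs \<Rightarrow> ncs" is nc_mul .

instance
proof
  fix a b c :: ncs
  show "a * b * c = a * (b * c)" by transfer (rule nc_mul_assoc)
  show "(a + b) * c = a * c + b * c" by transfer (rule nc_mul_add_left)
  show "a * (b + c) = a * b + a * c" by transfer (rule nc_mul_add_right)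
  show "1 * a = a" by transfer (rule nc_mul_one_left)
  show "a * 1 = a" by transfer (rule nc_mul_one_right)
  show "a + b + c = a + (b + c)" by transfer (auto simp: nc_add_def)
  show "a + b = b + a" by transfer (auto simp: nc_add_def)
  show "0 + a = a" by transfer (auto simp: nc_add_def)
  show "- a + a = 0" by transfer (auto simp: nc_add_def)
  show "a - b = a + - b" by transfer (auto simp: nc_add_def nc_sub_def)
  show "(0::ncs) \<noteq> 1" by transfer (auto simp: nc_one_def fun_eq_iff)
qed

end

lemma Abs_ncs_hom:
  "Abs_ncs (f \<oplus> g) = Abs_ncs f + Abs_ncs g"
  "Abs_ncs (f \<ominus> g) = Abs_ncs f - Abs_ncs g"
  "Abs_ncs (f \<otimes> g) = Abs_ncs f * Abs_ncs g"
  "Abs_ncs nc_one = 1"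
  by (simp_all add: plus_ncs_def minus_ncs_def times_ncs_def one_ncs_def Abs_ncs_inverse)

lemma inverse_series_identity:
  fixes a b x d u :: "'r::ring_1"
  assumes cancel: "\<And>y z. a * y * b = a * z * b \<Longrightarrow> y = z"
    and d: "d = 1 + (x - a * b + a * d * b) * d"
    and u_right_inv: "(1 - a * d * b) * (1 + a * u * b) = 1"
    and u_left_inv: "(1 + a * u * b) * (1 - a * d * b) = 1"
  shows "u = (1 + a * u * b) * (1 + (x - a * b + b * a) * u)"
proof -
  define E P where "E = x - a * b" and "P = a * d * b"
  have d_left_inv: "(1 - E - P) * d = 1"
    using d unfolding E_def P_def by (simp add: algebra_simps)
  \<comment> \<open>expanding (1 - P)(1 + aub) = 1 gives aub = P + P aub\<close>
  have "a * u * b = a * (d + d * (b * a) * u) * b"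
    using u_right_inv by (simp add: algebra_simps)
  then have u_via_d: "u = d * (1 + b * a * u)"
    by (simp add: algebra_simps cancel)
  have "(1 - E - P) * u = 1 + b * a * u"
    by (subst u_via_d) (simp only: mult.assoc[symmetric] d_left_inv mult_1_left)
  then have "1 + (E + b * a) * u = (1 - P) * u"
    by (simp add: algebra_simps)
  then have "(1 + a * u * b) * (1 + (E + b * a) * u) = u"
    using u_left_inv unfolding P_def by (simp only: mult.assoc[symmetric] mult_1_left)
  then show ?thesis
    unfolding E_def by simp
qed

lemma nc_var_mul_Cons: "(nc_var c \<otimes> f) (c' # w) = (if c = c' then f w else 0)"
proof -
  have "(nc_var c \<otimes> f) (c' # w) =
      (\<Sum>i\<le>length (c' # w). if i = 1 then (if c = c' then f w else 0) else 0)"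
    unfolding nc_mul_def nc_var_def
    by (rule sum.cong) (auto simp: take_Cons' split: if_splits)
  then show ?thesis by (subst (asm) sum.delta) auto
qed

lemma nc_mul_var_snoc: "(f \<otimes> nc_var c) (w @ [c']) = (if c = c' then f w else 0)"
proof -
  have "(f \<otimes> nc_var c) (w @ [c']) =
      (\<Sum>i\<le>length (w @ [c']). if i = length w then (if c = c' then f w else 0) else 0)"
    unfolding nc_mul_def nc_var_def
  proof (rule sum.cong)
    fix i
    assume "i \<in> {..length (w @ [c'])}"
    then consider "i < length w" | "i = length w" | "i = Suc (length w)"
      by fastforce
    then show "f (take i (w @ [c'])) * (if drop i (w @ [c']) = [c] then 1 else 0) =
        (if i = length w then if c = c' then f w else 0 else 0)"
    proof cases
      case 1
      then have "length (drop i (w @ [c'])) \<ge> 2" by simp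
      then show ?thesis using 1 by auto
    qed auto
  qed simp
  then show ?thesis by (subst (asm) sum.delta) auto
qed

text \<open>The coefficient of a w b in a f b is f w, so a _ b is injective.\<close>
lemma cancel_a_b:
  assumes "Abs_ncs nc_a * f * Abs_ncs nc_b = Abs_ncs nc_a * g * Abs_ncs nc_b"
  shows "f = g"
  using assms
proof transfer
  fix f g
  assume h: "nc_a \<otimes> f \<otimes> nc_b = nc_a \<otimes> g \<otimes> nc_b"
  show "f = g"
  proof
    fix w
    have "(nc_a \<otimes> f \<otimes> nc_b) (LA # w @ [LB]) = (nc_a \<otimes> g \<otimes> nc_b) (LA # w @ [LB])"
      using h by simp
    then show "f w = g w"
      unfolding nc_a_def nc_b_def
      by (metis append_Cons nc_var_mul_Cons nc_mul_var_snoc)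
  qed
qed

definition agree_below :: "nat \<Rightarrow> ncps \<Rightarrow> ncps \<Rightarrow> bool" where
  "agree_below n f g \<longleftrightarrow> (\<forall>w. length w < n \<longrightarrow> f w = g w)"

lemma agree_below_refl: "agree_below n f f"
  by (simp add: agree_below_def)

lemma agree_below_add:
  "agree_below n f f' \<Longrightarrow> agree_below n g g' \<Longrightarrow> agree_below n (f \<oplus> g) (f' \<oplus> g')"
  unfolding agree_below_def nc_add_def by auto

lemma agree_below_mul:
  "agree_below n f f' \<Longrightarrow> agree_below n g g' \<Longrightarrow> agree_below n (f \<otimes> g) (f' \<otimes> g')"
  unfolding agree_below_def nc_mul_def by (auto intro!: sum.cong)

lemma agree_below_shift:
  assumes "h [] = 0" and "agree_below n f g"
  shows "agree_below (Suc n) (h \<otimes> f) (h \<otimes> g)"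
  unfolding agree_below_def nc_mul_def
proof (intro allI impI sum.cong refl)
  fix w :: "letter list" and i
  assume "length w < Suc n" "i \<in> {..length w}"
  then show "h (take i w) * f (drop i w) = h (take i w) * g (drop i w)"
    using assms by (cases i) (auto simp: agree_below_def)
qed

lemma fixed_point_unique:
  assumes L0: "L [] = 0" and K0: "K [] = 0"
    and V: "V = (nc_one \<oplus> L \<otimes> V \<otimes> M) \<otimes> (nc_one \<oplus> K \<otimes> V)"
    and U: "U = (nc_one \<oplus> L \<otimes> U \<otimes> M) \<otimes> (nc_one \<oplus> K \<otimes> U)"
  shows "V = U"
proof -
  have "agree_below n V U" for n
  proof (induction n)
    case 0
    then show ?case by (simp add: agree_below_def)
  next
    case (Suc n)
    have "agree_below (Suc n) ((nc_one \<oplus> L \<otimes> V \<otimes> M) \<otimes> (nc_one \<oplus> K \<otimes> V))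
        ((nc_one \<oplus> L \<otimes> U \<otimes> M) \<otimes> (nc_one \<oplus> K \<otimes> U))"
      by (intro agree_below_mul agree_below_add agree_below_refl agree_below_shift Suc L0 K0)
    then show ?case using V U by simp
  qed
  then show ?thesis
    by (auto simp: agree_below_def fun_eq_iff)
qed

theorem theorem4:
  fixes D U :: ncps
  assumes hD: "D = nc_one \<oplus> ((nc_x \<ominus> nc_a \<otimes> nc_b \<oplus> nc_a \<otimes> D \<otimes> nc_b) \<otimes> D)"
    and hU1: "(nc_one \<ominus> nc_a \<otimes> D \<otimes> nc_b) \<otimes> (nc_one \<oplus> nc_a \<otimes> U \<otimes> nc_b) = nc_one"
    and hU2: "(nc_one \<oplus> nc_a \<otimes> U \<otimes> nc_b) \<otimes> (nc_one \<ominus> nc_a \<otimes> D \<otimes> nc_b) = nc_one"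
  shows "U = (nc_one \<oplus> nc_a \<otimes> U \<otimes> nc_b) \<otimes>
             (nc_one \<oplus> (nc_x \<ominus> nc_a \<otimes> nc_b \<oplus> nc_b \<otimes> nc_a) \<otimes> U)
    \<and> (\<forall>V :: ncps. V = (nc_one \<oplus> nc_a \<otimes> V \<otimes> nc_b) \<otimes>
             (nc_one \<oplus> (nc_x \<ominus> nc_a \<otimes> nc_b \<oplus> nc_b \<otimes> nc_a) \<otimes> V) \<longrightarrow> V = U)"
    (is "U = ?rhs U \<and> _")
proof
  have "Abs_ncs U = Abs_ncs (?rhs U)"
    unfolding Abs_ncs_hom
    by (rule inverse_series_identity[OF cancel_a_b, where x = "Abs_ncs nc_x" and d = "Abs_ncs D"])
      (use hD hU1 hU2 in \<open>simp_all flip: Abs_ncs_hom\<close>)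
  then show U_eq: "U = ?rhs U"
    by (simp add: Abs_ncs_inject)
  have no_constant: "nc_a [] = 0" "(nc_x \<ominus> nc_a \<otimes> nc_b \<oplus> nc_b \<otimes> nc_a) [] = 0"
    by (simp_all add: nc_add_def nc_sub_def nc_mul_def nc_a_def nc_b_def nc_x_def nc_var_def)
  show "\<forall>V. V = ?rhs V \<longrightarrow> V = U"
    using fixed_point_unique[OF no_constant _ U_eq] by blast
qed

end
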